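(* Let $\mathbb{K}$ be either $\mathbb{R}$ or $\mathbb{C}$, with all coefficients and solutions in $\mathbb{K}$. Let $D$ be a positive integer and let $1 \le D < q \le \infty$. Let $I$ be an infinite set. For all $i\in I$ and $d \in \{1,\dots,D\}$ let $\mathbf{a}_{i,d} = (a_{i,d,j})_{j=1}^\infty \in \ell^{q/(q-d)}$, and let $b_i \in \mathbb{K}$. For all $i \in I$ consider the multiplicative polynomial equation \[ P_i(\mathbf{x}) = \sum_{k=1}^{D} \sum_{(d_1,\dots,d_k)\in \mathcal{D}_k} (\mathbf{a}_{i,d_1}, \mathbf{x}^{d_1}) (\mathbf{a}_{i,d_2}, \mathbf{x}^{d_2}) \cdots (\mathbf{a}_{i,d_k}, \mathbf{x}^{d_k}) = b_i, \] where $(\mathbf{a}_{i,d},\mathbf{x}^d) = \sum_{j=1}^\infty a_{i,d,j} x_j^d$. Equivalently, $P_i(\mathbf{x}) = \sum_{k=1}^D\sum_{\Delta\in\mathcal{D}_k}\sum_{J\in\mathbb{N}^k} a_{i,\Delta,J}\, x_J^{\Delta}$ with $a_{i,(d_1,\dots,d_k),(j_1,\dots,j_k)} = a_{i,d_1,j_1}\cdots a_{i,d_k,j_k}$ and $x_J^\Delta = x_{j_1}^{d_1}\cdots x_{j_k}^{d_k}$. Let $M>0$. If for every finite subset $S$ of $I$ the finite set of equations $\{P_i(\mathbf{x}) = b_i : i \in S\}$ has a solution $\mathbf{x}_S \in \ell^q$ with $\|\mathbf{x}_S\|_q \le M$, then the infinite set of equations $\{P_i(\mathbf{x}) = b_i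 : i\in I\}$ has a solution $\mathbf{x} \in \ell^q$ with $\|\mathbf{x}\|_q \le M$.
   Context: $\mathbb{N}=\{1,2,3,\dots\}$. For $k\in\{1,\dots,D\}$, $\mathcal{D}_k = \{(d_1,\dots,d_k)\in\mathbb{N}^k : d_1+\cdots+d_k \le D\}$. For $q=\infty$ one sets $q/(q-d)=1$ and $q/d=\infty$. $\ell^p$ ($1\le p<\infty$) denotes sequences with $\|\mathbf{a}\|_p=(\sum_j|a_j|^p)^{1/p}<\infty$ and $\ell^\infty$ bounded sequences with the sup norm; $\mathbf{x}^d = (x_j^d)_{j\ge1}$. For $\mathbf{x}\in\ell^q$ each series $(\mathbf{a}_{i,d},\mathbf{x}^d)$ converges absolutely by Hölder's inequality, since $\mathbf{x}^d\in\ell^{q/d}$ and $(q/(q-d), q/d)$ is a conjugate pair. *)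

theory Defs
  imports "HOL-Analysis.Analysis"
begin

text \<open>Sequences are indexed by nat (index 0 plays the role of j = 1).
  Exponents live in ereal so that q = \<infinity> is allowed.\<close>

definition in_lp :: "ereal \<Rightarrow> (nat \<Rightarrow> 'k::real_normed_vector) \<Rightarrow> bool" where
  "in_lp p x = (if p = \<infinity> then bdd_above (range (\<lambda>j. norm (x j)))
                else summable (\<lambda>j. norm (x j) powr real_of_ereal p))"

definition lp_norm :: "ereal \<Rightarrow> (nat \<Rightarrow> 'k::real_normed_vector) \<Rightarrow> real" where
  "lp_norm p x = (if p = \<infinity> then (SUP j. norm (x j))
                  else (\<Sum>j. norm (x j) powr real_of_ereal p) powr (1 / real_of_ereal p))"

definition dual_exp :: "ereal \<Rightarrow> nat \<Rightarrow> ereal" where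
  "dual_exp q d = (if q = \<infinity> then 1 else q / (q - ereal (real d)))"

definition pairing :: "(nat \<Rightarrow> 'k::real_normed_field) \<Rightarrow> (nat \<Rightarrow> 'k) \<Rightarrow> nat \<Rightarrow> 'k" where
  "pairing a x d = (\<Sum>j. a j * x j ^ d)"

definition Dtuples :: "nat \<Rightarrow> nat \<Rightarrow> nat list set" where
  "Dtuples D k = {ds. length ds = k \<and> (\<forall>d\<in>set ds. 1 \<le> d) \<and> sum_list ds \<le> D}"

definition mult_poly :: "nat \<Rightarrow> (nat \<Rightarrow> nat \<Rightarrow> 'k::real_normed_field) \<Rightarrow> (nat \<Rightarrow> 'k) \<Rightarrow> 'k" where
  "mult_poly D a x = (\<Sum>k\<in>{1..D}. \<Sum>ds\<in>Dtuples D k. prod_list (map (\<lambda>d. pairing (a d) x d) ds))"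

end

(*
  The closed ball B = {x. in_lp q x \<and> lp_norm q x \<le> M} is compact in the product topology on
  sequences: it is closed, and it lies in a product of closed balls of the scalar field, which is
  compact by Tychonoff because every real normed field is \<real> or \<complex> (Mazur; proved here by
  minimising norm ((\<xi> - a)\<^sup>2 + v) over a \<in> \<real>, v \<ge> 0). On B the terms of each pairing
  (a, x\<^sup>d) are dominated by one summable sequence up to a remainder of arbitrarily small total
  mass (Young's inequality for the exponents q/(q-d) and q/d), so the pairings, and with them all
  P_i, are continuous on B. Hence the solution sets {x \<in> B. P_i x = b_i} are closed subsets of
  a compact set with the finite intersection property, and they have a common point.
*)

theory Submission
  imports Defs "HOL-Computational_Algebra.Polynomial"
begin

section \<open>Odd powers as products of real quadratics\<close>

lemma map_poly_of_real_add:
  "map_poly (of_real :: real \<Rightarrow> 'a::{real_algebra_1,comm_ring_1}) (p + q) =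
   map_poly of_real p + map_poly of_real q"
  by (intro poly_eqI) (simp add: coeff_map_poly)

lemma map_poly_of_real_mult:
  "map_poly (of_real :: real \<Rightarrow> 'a::{real_algebra_1,comm_ring_1}) (p * q) =
   map_poly of_real p * map_poly of_real q"
  by (intro poly_eqI) (simp add: coeff_map_poly coeff_mult)

lemma map_poly_of_real_prod:
  "map_poly (of_real :: real \<Rightarrow> 'a::{real_algebra_1,comm_ring_1}) (\<Prod>k\<in>A. p k) =
   (\<Prod>k\<in>A. map_poly of_real (p k))"
  by (induction A rule: infinite_finite_induct) (auto simp: map_poly_of_real_mult)

lemma poly_map_poly_of_real_linear:
  "poly (map_poly (of_real :: real \<Rightarrow> 'a::{real_algebra_1,comm_ring_1}) [:c, 1:]) y = y + of_real c"
  by (simp add: map_poly_pCons)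

lemma poly_map_poly_of_real_quadratic:
  "poly (map_poly (of_real :: real \<Rightarrow> 'a::{real_algebra_1,comm_ring_1}) [:c, b, 1:]) y =
   y\<^sup>2 + of_real b * y + of_real c"
  by (simp add: map_poly_pCons power2_eq_square algebra_simps)

lemma poly_map_poly_of_real_const_add_monom:
  "poly (map_poly (of_real :: real \<Rightarrow> 'a::{real_algebra_1,comm_ring_1}) ([:c:] + monom 1 n)) y =
   y ^ n + of_real c"
  unfolding map_poly_of_real_add by (simp add: map_poly_pCons map_poly_monom poly_monom)

lemma cis_quadratic_root:
  "(- (complex_of_real e * cis t))\<^sup>2 + complex_of_real (2 * e * cos t) * (- (complex_of_real e * cis t))
     + complex_of_real (e\<^sup>2) = 0"
  by (simp add: complex_eq_iff power2_eq_square cos_double sin_double algebra_simps)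
    (metis distrib_left mult_1_right sin_cos_squared_add3)

lemma odd_power_add_root_imp_factor_root:
  fixes e :: real and z :: complex
  assumes e: "e \<noteq> 0" and n: "n = 2 * j + 1" and z: "z ^ n = - (complex_of_real e ^ n)"
  shows "poly (map_poly complex_of_real
    ([:e, 1:] * (\<Prod>k\<in>{1..j}. [:e\<^sup>2, 2 * e * cos (2 * pi * real k / real n), 1:]))) z = 0"
proof -
  let ?q = "\<lambda>k::nat. [:e\<^sup>2, 2 * e * cos (2 * pi * real k / real n), 1:]"
  let ?C = "map_poly complex_of_real"
  have "0 < n"
    using n by simp
  define w where "w = - z / complex_of_real e"
  have "w ^ n = 1"
    using z e n by (simp add: w_def power_divide)
  then have "w \<in> (\<lambda>k. cis (2 * pi * k / n)) ` {..<n}"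
    using bij_betw_imp_surj_on[OF Complex.bij_betw_roots_unity[OF \<open>0 < n\<close>]] by simp
  then obtain k where k: "k < n" and "w = cis (2 * pi * k / n)"
    by auto
  moreover have "z = - (complex_of_real e * w)"
    using e by (simp add: w_def)
  ultimately have z: "z = - (complex_of_real e * cis (2 * pi * k / n))"
    by simp
  have root: "poly (?C (?q k)) z = 0"
    unfolding z poly_map_poly_of_real_quadratic by (rule cis_quadratic_root)
  show ?thesis
  proof (cases "k = 0")
    case True
    then show ?thesis
      unfolding map_poly_of_real_mult poly_mult by (simp add: z map_poly_pCons)
  next
    case False
    \<comment> \<open>for \<open>k > j\<close> the root \<open>z\<close> belongs to the factor of index \<open>n - k\<close>\<close>
    define k' where "k' = (if k \<le> j then k else n - k)"
    have "k' \<in> {1..j}"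
      using False k n unfolding k'_def by auto
    moreover have "?q k' = ?q k"
    proof -
      have "cos (2 * pi * real (n - k) / n) = cos (2 * pi - 2 * pi * k / n)"
        using k n by (simp add: diff_divide_distrib right_diff_distrib)
      then show ?thesis
        by (simp add: k'_def)
    qed
    ultimately have "(\<Prod>k\<in>{1..j}. poly (?C (?q k)) z) = 0"
      using root by (metis finite_atLeastAtMost prod_zero)
    then show ?thesis
      unfolding map_poly_of_real_mult map_poly_of_real_prod poly_mult poly_prod by simp
  qed
qed

lemma odd_power_add_factorization:
  fixes e :: real and j :: nat
  assumes e: "e \<noteq> 0"
  defines "n \<equiv> 2 * j + 1"
  shows "[:e, 1:] * (\<Prod>k\<in>{1..j}. [:e\<^sup>2, 2 * e * cos (2 * pi * real k / real n), 1:]) =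
    [:e ^ n:] + monom 1 n"
    (is "?P = ?Q")
proof -
  let ?C = "map_poly complex_of_real"
  have n: "0 < n"
    unfolding n_def by simp
  have deg_P: "degree ?P = n"
    by (subst degree_mult_eq) (auto simp: degree_prod_sum_eq n_def)
  \<comment> \<open>both sides are monic of degree \<open>n\<close> and share the \<open>n\<close> distinct complex roots of \<open>z\<^sup>n = -e\<^sup>n\<close>\<close>
  have "?C ?P = ?C ?Q"
  proof (rule poly_eqI_degree_lead_coeff[of _ n _ "{z. z ^ n = - (complex_of_real e ^ n)}"])
    have "lead_coeff ?P = 1"
      unfolding lead_coeff_mult lead_coeff_prod by simp
    then have "coeff ?P n = 1"
      using deg_P by simp
    moreover have "coeff ?Q n = 1"
      using n by (cases n) simp_all
    ultimately show "coeff (?C ?P) n = coeff (?C ?Q) n"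
      by (simp add: coeff_map_poly)
    show "n \<le> card {z. z ^ n = - (complex_of_real e ^ n)}"
      using card_nth_roots[of "- (complex_of_real e ^ n)" n] n e by simp
    show "degree (?C ?P) \<le> n" "degree (?C ?Q) \<le> n"
      using deg_P by (simp_all add: degree_map_poly degree_add_le degree_monom_le)
  next
    fix z assume z: "z \<in> {z. z ^ n = - (complex_of_real e ^ n)}"
    then have "poly (?C ?P) z = 0"
      using odd_power_add_root_imp_factor_root[OF e, of n j z] by (simp add: n_def)
    moreover have "poly (?C ?Q) z = 0"
      using z unfolding poly_map_poly_of_real_const_add_monom by simp
    ultimately show "poly (?C ?P) z = poly (?C ?Q) z"
      by simp
  qed
  then have "coeff (?C ?P) i = coeff (?C ?Q) i" for i
    by (rule arg_cong)
  then show ?thesis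
    by (intro poly_eqI) (simp only: coeff_map_poly of_real_0 of_real_eq_iff)
qed

lemma odd_power_add_eq_prod:
  fixes y :: "'a::{real_algebra_1,comm_ring_1}" and e :: real and j :: nat
  assumes e: "e \<noteq> 0"
  defines "n \<equiv> 2 * j + 1"
  shows "y ^ n + of_real (e ^ n) =
    (y + of_real e) * (\<Prod>k\<in>{1..j}. y\<^sup>2 + of_real (2 * e * cos (2 * pi * real k / real n)) * y + of_real (e\<^sup>2))"
proof -
  have "poly (map_poly of_real ([:e, 1:] * (\<Prod>k\<in>{1..j}. [:e\<^sup>2, 2 * e * cos (2 * pi * real k / real n), 1:]))) y =
      poly (map_poly of_real ([:e ^ n:] + monom 1 n)) y"
    unfolding n_def odd_power_add_factorization[OF e] ..
  then show ?thesis
    unfolding map_poly_of_real_mult map_poly_of_real_prod poly_mult poly_prod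
      poly_map_poly_of_real_linear poly_map_poly_of_real_quadratic
      poly_map_poly_of_real_const_add_monom
    by (rule sym)
qed

section \<open>Real normed fields are \<open>\<real>\<close> or \<open>\<complex>\<close>\<close>

lemma quartic_eq_prod_shifted_squares:
  fixes w :: "'a::real_field"
  assumes c: "\<bar>c\<bar> \<le> 1"
  shows "\<exists>p r. (w\<^sup>2 + of_real v)\<^sup>2 + of_real (2 * e * c) * (w\<^sup>2 + of_real v) + of_real (e\<^sup>2) =
    ((w - of_real p)\<^sup>2 + of_real (r\<^sup>2)) * ((w + of_real p)\<^sup>2 + of_real (r\<^sup>2))"
proof -
  define A where "A = v + e * c"
  define R where "R = sqrt (A\<^sup>2 + e\<^sup>2 * (1 - c\<^sup>2))"
  have "0 \<le> e\<^sup>2 * (1 - c\<^sup>2)"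
    using c by (simp add: abs_square_le_1)
  then have R: "\<bar>A\<bar> \<le> R" "R\<^sup>2 = A\<^sup>2 + e\<^sup>2 * (1 - c\<^sup>2)"
    unfolding R_def by (auto intro: real_le_rsqrt)
  define p where "p = sqrt ((R - A) / 2)"
  define r where "r = sqrt ((R + A) / 2)"
  have "p\<^sup>2 = (R - A) / 2" and "r\<^sup>2 = (R + A) / 2"
    using R(1) unfolding p_def r_def by simp_all
  then have rp: "r\<^sup>2 - p\<^sup>2 = A" "p\<^sup>2 + r\<^sup>2 = R"
    by simp_all
  have "((w - of_real p)\<^sup>2 + of_real (r\<^sup>2)) * ((w + of_real p)\<^sup>2 + of_real (r\<^sup>2)) =
      (w\<^sup>2)\<^sup>2 + 2 * of_real (r\<^sup>2 - p\<^sup>2) * w\<^sup>2 + of_real ((p\<^sup>2 + r\<^sup>2)\<^sup>2)"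
    by (simp add: power2_eq_square algebra_simps)
  also have "\<dots> = (w\<^sup>2)\<^sup>2 + 2 * of_real A * w\<^sup>2 + of_real (A\<^sup>2 + e\<^sup>2 * (1 - c\<^sup>2))"
    unfolding rp R(2) ..
  also have "\<dots> = (w\<^sup>2 + of_real v)\<^sup>2 + of_real (2 * e * c) * (w\<^sup>2 + of_real v) + of_real (e\<^sup>2)"
    by (simp add: A_def power2_eq_square algebra_simps)
  finally show ?thesis by metis
qed

lemma norm_shifted_square_ge:
  fixes \<xi> :: "'k::real_normed_field"
  assumes v: "0 \<le> v"
  shows "a\<^sup>2 + v - 2 * \<bar>a\<bar> * norm \<xi> - (norm \<xi>)\<^sup>2 \<le> norm ((\<xi> - of_real a)\<^sup>2 + of_real v)"
proof -
  have eq: "(\<xi> - of_real a)\<^sup>2 + of_real v = of_real (a\<^sup>2 + v) + (\<xi>\<^sup>2 - of_real (2 * a) * \<xi>)"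
    by (simp add: power2_eq_square algebra_simps)
  have "norm (\<xi>\<^sup>2 - of_real (2 * a) * \<xi>) \<le> (norm \<xi>)\<^sup>2 + 2 * \<bar>a\<bar> * norm \<xi>"
    using norm_triangle_ineq4[of "\<xi>\<^sup>2" "of_real (2 * a) * \<xi>"] by (simp add: norm_mult norm_power)
  moreover have "norm (of_real (a\<^sup>2 + v) :: 'k) = a\<^sup>2 + v"
    using v by (subst norm_of_real) simp
  ultimately show ?thesis
    unfolding eq using norm_diff_ineq[of "of_real (a\<^sup>2 + v) :: 'k" "\<xi>\<^sup>2 - of_real (2 * a) * \<xi>"]
    by linarith
qed

lemma norm_shifted_square_gt_outside:
  fixes \<xi> :: "'k::real_normed_field"
  defines "R \<equiv> 4 * norm \<xi> + 3 * (norm \<xi>)\<^sup>2 + 1"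
  assumes v: "0 \<le> v" and outside: "R < \<bar>a\<bar> \<or> R < v"
  shows "(norm \<xi>)\<^sup>2 < norm ((\<xi> - of_real a)\<^sup>2 + of_real v)"
proof -
  define s where "s = norm \<xi>"
  define N where "N = norm ((\<xi> - of_real a)\<^sup>2 + of_real v)"
  have s: "0 \<le> s" "0 \<le> s\<^sup>2" and R: "R = 4 * s + 3 * s\<^sup>2 + 1"
    by (simp_all add: s_def R_def)
  have lower: "a\<^sup>2 + v - 2 * \<bar>a\<bar> * s - s\<^sup>2 \<le> N"
    using norm_shifted_square_ge[OF v, of a \<xi>] by (simp add: s_def N_def)
  from outside have "s\<^sup>2 < N"
  proof
    assume "R < \<bar>a\<bar>"
    then have "4 * s + 1 \<le> \<bar>a\<bar>"
      using s unfolding R by linarith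
    then have "(4 * s + 1) * (2 * s + 1) \<le> \<bar>a\<bar> * (\<bar>a\<bar> - 2 * s)"
      using s by (intro mult_mono) auto
    then have "8 * s\<^sup>2 + 6 * s + 1 \<le> a\<^sup>2 - 2 * \<bar>a\<bar> * s"
      by (simp add: power2_eq_square algebra_simps)
    then show ?thesis
      using lower v s by linarith
  next
    assume "R < v"
    moreover have "0 \<le> (\<bar>a\<bar> - s)\<^sup>2"
      by simp
    then have "2 * \<bar>a\<bar> * s \<le> a\<^sup>2 + s\<^sup>2"
      by (simp add: power2_eq_square algebra_simps)
    ultimately show ?thesis
      using lower s unfolding R by linarith
  qed
  then show ?thesis
    by (simp add: s_def N_def)
qed

lemma norm_shifted_square_maximal_minimiser:
  fixes \<xi> :: "'k::real_normed_field"
  obtains a0 v0 where "0 \<le> v0"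
    and "\<And>a v. 0 \<le> v \<Longrightarrow> norm ((\<xi> - of_real a0)\<^sup>2 + of_real v0) \<le> norm ((\<xi> - of_real a)\<^sup>2 + of_real v)"
    and "\<And>a v. 0 \<le> v \<Longrightarrow> norm ((\<xi> - of_real a)\<^sup>2 + of_real v) = norm ((\<xi> - of_real a0)\<^sup>2 + of_real v0) \<Longrightarrow>
      v \<le> v0"
proof -
  define f where "f p = norm ((\<xi> - of_real (fst p))\<^sup>2 + of_real (snd p))" for p :: "real \<times> real"
  define R where "R = 4 * norm \<xi> + 3 * (norm \<xi>)\<^sup>2 + 1"
  define K where "K = {-R..R} \<times> {0..R}"
  have "0 \<le> R"
    unfolding R_def by simp
  then have K: "compact K" "(0, 0) \<in> K"
    unfolding K_def by (auto intro: compact_Times)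
  have f_cont: "continuous_on A f" for A
    unfolding f_def by (intro continuous_intros)
  have outside: "f (0, 0) < f (a, v)" if "0 \<le> v" "(a, v) \<notin> K" for a v
  proof -
    have "R < \<bar>a\<bar> \<or> R < v"
      using that unfolding K_def by auto
    then show ?thesis
      using norm_shifted_square_gt_outside[of v \<xi> a] that(1) by (simp add: f_def R_def norm_power)
  qed
  obtain p0 where p0: "p0 \<in> K" "\<And>p. p \<in> K \<Longrightarrow> f p0 \<le> f p"
    using continuous_attains_inf[OF K(1) _ f_cont] K(2) by blast
  have min: "f p0 \<le> f (a, v)" if "0 \<le> v" for a v
    using p0 K(2) outside[OF that] by (cases "(a, v) \<in> K") fastforce+
  define Ms where "Ms = K \<inter> {p. f p = f p0}"
  have "compact Ms"
    unfolding Ms_def by (intro compact_Int_closed K closed_Collect_eq f_cont continuous_on_const)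
  moreover have "p0 \<in> Ms"
    unfolding Ms_def using p0 by simp
  ultimately obtain p1 where p1: "p1 \<in> Ms" "\<And>p. p \<in> Ms \<Longrightarrow> snd p \<le> snd p1"
    using continuous_attains_sup[of Ms snd] continuous_on_snd[OF continuous_on_id] by blast
  show ?thesis
  proof (rule that[of "snd p1" "fst p1"])
    show "0 \<le> snd p1"
      using p1(1) unfolding Ms_def K_def by auto
    fix a v :: real assume v: "0 \<le> v"
    show "norm ((\<xi> - of_real (fst p1))\<^sup>2 + of_real (snd p1)) \<le> norm ((\<xi> - of_real a)\<^sup>2 + of_real v)"
      using p1(1) min[OF v] unfolding Ms_def f_def by simp
    assume "norm ((\<xi> - of_real a)\<^sup>2 + of_real v) = norm ((\<xi> - of_real (fst p1))\<^sup>2 + of_real (snd p1))"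
    then have "f (a, v) = f p0"
      using p1(1) unfolding Ms_def f_def by simp
    moreover from this have "(a, v) \<in> K"
      using outside[OF v] p0 K(2) by fastforce
    ultimately show "v \<le> snd p1"
      using p1(2)[of "(a, v)"] unfolding Ms_def by simp
  qed
qed

lemma norm_add_le_if_quadratic_factors_ge:
  fixes y :: "'k::real_normed_field"
  assumes quadratic_ge: "\<And>c. \<bar>c\<bar> \<le> 1 \<Longrightarrow> m\<^sup>2 \<le> norm (y\<^sup>2 + of_real (2 * e * c) * y + of_real (e\<^sup>2))"
    and y: "norm y = m" and e: "0 < e" "e < m"
  shows "norm (y + of_real e) \<le> m"
proof -
  have m: "0 < m"
    using e by simp
  have "norm (y + of_real e) \<le> m + m * (e / m) ^ j" for j
  proof -
    define n where "n = 2 * j + 1"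
    let ?c = "\<lambda>k::nat. cos (2 * pi * real k / real n)"
    have factor: "y ^ n + of_real (e ^ n) =
        (y + of_real e) * (\<Prod>k\<in>{1..j}. y\<^sup>2 + of_real (2 * e * ?c k) * y + of_real (e\<^sup>2))"
      unfolding n_def using e by (intro odd_power_add_eq_prod) simp
    have "norm (y + of_real e) * m ^ (2 * j) = norm (y + of_real e) * (\<Prod>k\<in>{1..j}. m\<^sup>2)"
      by (simp add: power_mult)
    also have "\<dots> \<le> norm (y + of_real e) *
        (\<Prod>k\<in>{1..j}. norm (y\<^sup>2 + of_real (2 * e * ?c k) * y + of_real (e\<^sup>2)))"
      by (intro mult_left_mono prod_mono conjI quadratic_ge abs_cos_le_one) simp_all
    also have "\<dots> = norm (y ^ n + of_real (e ^ n))"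
      unfolding factor norm_mult prod_norm ..
    also have "\<dots> \<le> m ^ n + e ^ n"
      using norm_triangle_ineq[of "y ^ n" "of_real (e ^ n)"] y e by (simp add: norm_power)
    also have "\<dots> = (m + m * (e / m) ^ n) * m ^ (2 * j)"
    proof -
      have m_n: "m * m ^ (2 * j) = m ^ n"
        by (simp add: n_def)
      have "(m + m * (e / m) ^ n) * m ^ (2 * j) = m * m ^ (2 * j) + (e / m) ^ n * (m * m ^ (2 * j))"
        by (simp add: algebra_simps)
      also have "\<dots> = m ^ n + e ^ n"
        unfolding m_n using m by (simp add: power_divide)
      finally show ?thesis ..
    qed
    finally have "norm (y + of_real e) \<le> m + m * (e / m) ^ n"
      using m by simp
    also have "\<dots> \<le> m + m * (e / m) ^ j"
      using m e unfolding n_def by (intro add_left_mono mult_left_mono power_decreasing) simp_all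
    finally show ?thesis .
  qed
  moreover have "(\<lambda>j. m + m * (e / m) ^ j) \<longlonglongrightarrow> m + m * 0"
    using e by (intro tendsto_add tendsto_const tendsto_mult LIMSEQ_power_zero) simp
  ultimately show ?thesis
    by (intro LIMSEQ_le_const) auto
qed

lemma norm_shifted_square_min_step:
  fixes w :: "'k::real_normed_field"
  assumes min: "\<And>a v. 0 \<le> v \<Longrightarrow> m \<le> norm ((w - of_real a)\<^sup>2 + of_real v)"
    and m: "norm (w\<^sup>2 + of_real v0) = m" "0 < m"
  shows "norm (w\<^sup>2 + of_real v0 + of_real (m / 2)) \<le> m"
proof (rule norm_add_le_if_quadratic_factors_ge)
  fix c :: real assume c: "\<bar>c\<bar> \<le> 1"
  obtain p r where pr: "(w\<^sup>2 + of_real v0)\<^sup>2 + of_real (2 * (m / 2) * c) * (w\<^sup>2 + of_real v0) + of_real ((m / 2)\<^sup>2) =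
      ((w - of_real p)\<^sup>2 + of_real (r\<^sup>2)) * ((w + of_real p)\<^sup>2 + of_real (r\<^sup>2))"
    using quartic_eq_prod_shifted_squares[OF c] by blast
  have "m \<le> norm ((w - of_real p)\<^sup>2 + of_real (r\<^sup>2))"
    by (rule min) simp
  moreover have "m \<le> norm ((w + of_real p)\<^sup>2 + of_real (r\<^sup>2))"
    using min[of "r\<^sup>2" "- p"] by simp
  ultimately show "m\<^sup>2 \<le> norm ((w\<^sup>2 + of_real v0)\<^sup>2 + of_real (2 * (m / 2) * c) * (w\<^sup>2 + of_real v0) +
      of_real ((m / 2)\<^sup>2))"
    unfolding pr norm_mult power2_eq_square[of m] using m(2) by (intro mult_mono) auto
qed (use m in simp_all)

lemma exists_real_quadratic_root:
  fixes \<xi> :: "'k::real_normed_field"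
  shows "\<exists>a v. 0 \<le> v \<and> (\<xi> - of_real a)\<^sup>2 + of_real v = 0"
proof (rule ccontr)
  assume no_root: "\<not> ?thesis"
  obtain a0 v0 where v0: "0 \<le> v0"
    and min: "\<And>a v. 0 \<le> v \<Longrightarrow> norm ((\<xi> - of_real a0)\<^sup>2 + of_real v0) \<le> norm ((\<xi> - of_real a)\<^sup>2 + of_real v)"
    and maximal: "\<And>a v. 0 \<le> v \<Longrightarrow>
      norm ((\<xi> - of_real a)\<^sup>2 + of_real v) = norm ((\<xi> - of_real a0)\<^sup>2 + of_real v0) \<Longrightarrow> v \<le> v0"
    by (rule norm_shifted_square_maximal_minimiser[of \<xi>]) blast
  define m where "m = norm ((\<xi> - of_real a0)\<^sup>2 + of_real v0)"
  have "(\<xi> - of_real a0)\<^sup>2 + of_real v0 \<noteq> 0"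
    using no_root v0 by blast
  then have "0 < m"
    unfolding m_def by simp
  \<comment> \<open>raising \<open>v\<close> by \<open>m/2\<close> at a minimiser gives again a minimiser\<close>
  have "norm ((\<xi> - of_real a0)\<^sup>2 + of_real v0 + of_real (m / 2)) \<le> m"
  proof (rule norm_shifted_square_min_step)
    show "m \<le> norm ((\<xi> - of_real a0 - of_real a)\<^sup>2 + of_real v)" if "0 \<le> v" for a v
      using min[OF that, of "a0 + a"] by (simp add: m_def diff_diff_add)
  qed (use \<open>0 < m\<close> in \<open>simp_all add: m_def\<close>)
  then have "norm ((\<xi> - of_real a0)\<^sup>2 + of_real (v0 + m / 2)) = m"
    using min[of "v0 + m / 2" a0] v0 \<open>0 < m\<close> by (simp add: m_def add.assoc)
  then have "v0 + m / 2 \<le> v0"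
    using maximal[of "v0 + m / 2" a0] v0 \<open>0 < m\<close> by (simp add: m_def)
  then show False
    using \<open>0 < m\<close> by simp
qed

lemma abs_add_abs_le_norm_imaginary:
  fixes \<iota> :: "'k::real_normed_field"
  assumes \<iota>: "\<iota>\<^sup>2 = -1"
  shows "\<bar>a\<bar> + \<bar>b\<bar> \<le> 2 * norm (of_real a + of_real b * \<iota>)"
proof -
  let ?z = "of_real a + of_real b * \<iota>" and ?w = "of_real a - of_real b * \<iota>"
  define S where "S = \<bar>a\<bar> + \<bar>b\<bar>"
  have "(norm \<iota>)\<^sup>2 = 1"
    using arg_cong[OF \<iota>, of norm] by (simp add: norm_power)
  then have "norm \<iota> = 1"
    using norm_ge_zero[of \<iota>] by (auto simp: power2_eq_1_iff)
  then have "norm ?w \<le> S"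
    using norm_triangle_ineq4[of "of_real a" "of_real b * \<iota>"] by (simp add: S_def norm_mult)
  have "?z * ?w = (of_real a)\<^sup>2 - (of_real b)\<^sup>2 * \<iota>\<^sup>2"
    by (simp add: power2_eq_square algebra_simps)
  also have "\<dots> = of_real (a\<^sup>2 + b\<^sup>2)"
    unfolding \<iota> by simp
  finally have "norm ?z * norm ?w = a\<^sup>2 + b\<^sup>2"
    by (metis norm_mult norm_of_real abs_of_nonneg sum_squares_ge_zero power2_eq_square)
  then have sum_squares_le: "a\<^sup>2 + b\<^sup>2 \<le> norm ?z * S"
    using \<open>norm ?w \<le> S\<close> by (metis mult_left_mono norm_ge_zero)
  have "S\<^sup>2 \<le> 2 * (a\<^sup>2 + b\<^sup>2)"
    using zero_le_power2[of "\<bar>a\<bar> - \<bar>b\<bar>"] unfolding S_def by (simp add: power2_eq_square algebra_simps)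
  also have "\<dots> \<le> 2 * (norm ?z * S)"
    using sum_squares_le by simp
  finally have "S * S \<le> 2 * (norm ?z * S)"
    by (simp only: power2_eq_square)
  moreover have "0 \<le> S"
    by (simp add: S_def)
  ultimately have "S \<le> 2 * norm ?z"
    using mult_right_le_imp_le[of S S "2 * norm ?z"] by (cases "S = 0") (auto simp: mult.assoc)
  then show ?thesis
    by (simp add: S_def)
qed

lemma span_imaginary_unit:
  fixes \<iota> :: "'k::real_normed_field"
  assumes \<iota>: "\<iota>\<^sup>2 = -1"
  shows "\<exists>a b. \<xi> = of_real a + of_real b * \<iota>"
proof -
  obtain a v where v: "0 \<le> v" "(\<xi> - of_real a)\<^sup>2 + of_real v = 0"
    using exists_real_quadratic_root by blast
  then have "(\<xi> - of_real a)\<^sup>2 = - of_real v"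
    by (simp add: eq_neg_iff_add_eq_0)
  also have "\<dots> = (of_real (sqrt v) * \<iota>)\<^sup>2"
    unfolding power_mult_distrib \<iota> using v(1) by (simp flip: of_real_power)
  finally consider "\<xi> - of_real a = of_real (sqrt v) * \<iota>" | "\<xi> - of_real a = of_real (- sqrt v) * \<iota>"
    unfolding power2_eq_iff by auto
  then show ?thesis
    by (metis diff_add_cancel add.commute)
qed

lemma real_if_no_imaginary_unit:
  fixes \<xi> :: "'k::real_normed_field"
  assumes "\<nexists>\<iota>::'k. \<iota>\<^sup>2 = -1"
  shows "\<exists>a. \<xi> = of_real a"
proof -
  obtain a v where v: "0 \<le> v" "(\<xi> - of_real a)\<^sup>2 + of_real v = 0"
    using exists_real_quadratic_root by blast
  have "v = 0"
  proof (rule ccontr)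
    assume "v \<noteq> 0"
    moreover have "(\<xi> - of_real a)\<^sup>2 = - of_real v"
      using v(2) by (simp add: eq_neg_iff_add_eq_0)
    ultimately have "((\<xi> - of_real a) / of_real (sqrt v))\<^sup>2 = -1"
      using v(1) by (simp add: power_divide flip: of_real_power)
    then show False
      using assms by blast
  qed
  then show ?thesis
    using v by auto
qed

lemma real_normed_field_span_imaginary_unit:
  "\<exists>\<iota>::'k::real_normed_field. \<forall>\<xi>. \<exists>a b. \<xi> = of_real a + of_real b * \<iota> \<and> \<bar>a\<bar> + \<bar>b\<bar> \<le> 2 * norm \<xi>"
proof (cases "\<exists>\<iota>::'k. \<iota>\<^sup>2 = -1")
  case True
  then obtain \<iota> :: 'k where \<iota>: "\<iota>\<^sup>2 = -1"
    by blast
  show ?thesis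
  proof (rule exI[of _ \<iota>], rule allI)
    fix \<xi> :: 'k
    obtain a b where "\<xi> = of_real a + of_real b * \<iota>"
      using span_imaginary_unit[OF \<iota>] by blast
    then show "\<exists>a b. \<xi> = of_real a + of_real b * \<iota> \<and> \<bar>a\<bar> + \<bar>b\<bar> \<le> 2 * norm \<xi>"
      using abs_add_abs_le_norm_imaginary[OF \<iota>, of a b] by (intro exI[of _ a] exI[of _ b]) simp
  qed
next
  case False
  show ?thesis
  proof (rule exI[of _ 0], rule allI)
    fix \<xi> :: 'k
    obtain a where "\<xi> = of_real a"
      using real_if_no_imaginary_unit[OF False] by blast
    then show "\<exists>a b. \<xi> = of_real a + of_real b * 0 \<and> \<bar>a\<bar> + \<bar>b\<bar> \<le> 2 * norm \<xi>"
      by (intro exI[of _ a] exI[of _ 0]) simp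
  qed
qed

lemma compact_cball_real_normed_field: "compact (cball (0::'k::real_normed_field) M)"
proof -
  obtain \<iota> :: 'k where \<iota>: "\<And>\<xi>. \<exists>a b. \<xi> = of_real a + of_real b * \<iota> \<and> \<bar>a\<bar> + \<bar>b\<bar> \<le> 2 * norm \<xi>"
    using real_normed_field_span_imaginary_unit by blast
  define \<phi> where "\<phi> p = of_real (fst p) + of_real (snd p) * \<iota>" for p :: "real \<times> real"
  have cover: "cball 0 M \<subseteq> \<phi> ` ({-2 * M..2 * M} \<times> {-2 * M..2 * M})"
  proof
    fix \<xi> :: 'k assume "\<xi> \<in> cball 0 M"
    moreover obtain a b where "\<xi> = \<phi> (a, b)" "\<bar>a\<bar> + \<bar>b\<bar> \<le> 2 * norm \<xi>"
      using \<iota>[of \<xi>] unfolding \<phi>_def by auto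
    ultimately show "\<xi> \<in> \<phi> ` ({-2 * M..2 * M} \<times> {-2 * M..2 * M})"
      by (intro image_eqI[of _ _ "(a, b)"]) auto
  qed
  moreover have "compact (\<phi> ` ({-2 * M..2 * M} \<times> {-2 * M..2 * M}))"
    unfolding \<phi>_def by (intro compact_continuous_image continuous_intros compact_Times compact_Icc)
  ultimately have "compact (\<phi> ` ({-2 * M..2 * M} \<times> {-2 * M..2 * M}) \<inter> cball 0 M)"
    by (intro compact_Int_closed) auto
  also have "\<phi> ` ({-2 * M..2 * M} \<times> {-2 * M..2 * M}) \<inter> cball 0 M = cball 0 M"
    using cover by blast
  finally show ?thesis .
qed

lemma Cauchy_convergent_real_normed_field:
  fixes X :: "nat \<Rightarrow> 'k::real_normed_field"
  assumes "Cauchy X"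
  shows "convergent X"
proof -
  obtain b where "\<And>n. X n \<in> cball 0 b"
    using cauchy_imp_bounded[OF assms] by (auto simp: bounded_iff)
  moreover have "complete (cball (0::'k) b)"
    by (intro compact_imp_complete compact_cball_real_normed_field)
  ultimately show ?thesis
    using assms unfolding complete_def convergent_def by blast
qed

lemma summable_norm_cancel_real_normed_field:
  fixes f :: "nat \<Rightarrow> 'k::real_normed_field"
  assumes "summable (\<lambda>n. norm (f n))"
  shows "summable f"
proof -
  let ?S = "\<lambda>n. \<Sum>i<n. f i" and ?T = "\<lambda>n. \<Sum>i<n. norm (f i)"
  have dist_le: "dist (?S m) (?S n) \<le> dist (?T m) (?T n)" if "m \<le> n" for m n
  proof -
    have "dist (?S m) (?S n) = norm (\<Sum>i\<in>{m..<n}. f i)"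
      using that by (simp add: dist_norm norm_minus_commute sum_diff_nat_ivl[of 0, symmetric]
          atLeast0LessThan)
    also have "\<dots> \<le> (\<Sum>i\<in>{m..<n}. norm (f i))"
      by (rule norm_sum)
    also have "\<dots> = dist (?T m) (?T n)"
      using that sum_mono2[of "{..<n}" "{..<m}" "\<lambda>i. norm (f i)"]
      by (simp add: dist_real_def sum_diff_nat_ivl[of 0, symmetric] atLeast0LessThan)
    finally show ?thesis .
  qed
  have "Cauchy ?T"
    using assms by (simp add: summable_iff_convergent convergent_Cauchy)
  have "Cauchy ?S"
  proof (rule metric_CauchyI)
    fix e :: real assume "0 < e"
    then obtain N where N: "\<And>m n. N \<le> m \<Longrightarrow> N \<le> n \<Longrightarrow> dist (?T m) (?T n) < e"
      using metric_CauchyD[OF \<open>Cauchy ?T\<close>] by blast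
    have "dist (?S m) (?S n) < e" if "N \<le> m" "N \<le> n" for m n
    proof (cases "m \<le> n")
      case True
      then show ?thesis using dist_le[of m n] N[OF that] by linarith
    next
      case False
      then show ?thesis using dist_le[of n m] N[OF that(2,1)] by (simp add: dist_commute)
    qed
    then show "\<exists>M. \<forall>m\<ge>M. \<forall>n\<ge>M. dist (?S m) (?S n) < e"
      by blast
  qed
  then show ?thesis
    unfolding summable_iff_convergent by (rule Cauchy_convergent_real_normed_field)
qed

lemma norm_suminf_le_real_normed_field:
  fixes f :: "nat \<Rightarrow> 'k::real_normed_field"
  assumes "summable (\<lambda>n. norm (f n))"
  shows "norm (\<Sum>n. f n) \<le> (\<Sum>n. norm (f n))"
proof (rule LIMSEQ_le)
  show "(\<lambda>n. norm (\<Sum>i<n. f i)) \<longlonglongrightarrow> norm (\<Sum>n. f n)"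
    using summable_LIMSEQ[OF summable_norm_cancel_real_normed_field[OF assms]] by (rule tendsto_norm)
  show "(\<lambda>n. \<Sum>i<n. norm (f i)) \<longlonglongrightarrow> (\<Sum>n. norm (f n))"
    by (rule summable_LIMSEQ[OF assms])
  show "\<exists>N. \<forall>n\<ge>N. norm (\<Sum>i<n. f i) \<le> (\<Sum>i<n. norm (f i))"
    using norm_sum by blast
qed

section \<open>Continuity of uniformly dominated series\<close>

lemma dist_partial_sum_suminf_le:
  fixes f :: "nat \<Rightarrow> 'k::real_normed_field"
  assumes g: "summable g" and h: "summable h" "\<And>j. 0 \<le> h j"
    and dom: "\<And>j. norm (f j) \<le> g j + h j"
  shows "dist (\<Sum>j<n. f j) (\<Sum>j. f j) \<le> (\<Sum>j. g (j + n)) + suminf h"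
proof -
  have "summable (\<lambda>j. norm (f j))"
    using dom by (intro summable_comparison_test'[OF summable_add[OF g h(1)]]) simp
  then have f: "summable f" and tail: "summable (\<lambda>j. norm (f (j + n)))"
    by (rule summable_norm_cancel_real_normed_field, rule summable_ignore_initial_segment)
  have gn: "summable (\<lambda>j. g (j + n))" and hn: "summable (\<lambda>j. h (j + n))"
    using g h(1) by (simp_all add: summable_ignore_initial_segment)
  have "dist (\<Sum>j<n. f j) (\<Sum>j. f j) = norm (\<Sum>j. f (j + n))"
    using suminf_split_initial_segment[OF f, of n] by (simp add: dist_norm norm_minus_commute)
  also have "\<dots> \<le> (\<Sum>j. norm (f (j + n)))"
    by (rule norm_suminf_le_real_normed_field[OF tail])
  also have "\<dots> \<le> (\<Sum>j. g (j + n) + h (j + n))"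
    using dom tail gn hn by (intro suminf_le summable_add) simp_all
  also have "\<dots> = (\<Sum>j. g (j + n)) + (\<Sum>j. h (j + n))"
    using gn hn by (rule suminf_add[symmetric])
  also have "\<dots> \<le> (\<Sum>j. g (j + n)) + suminf h"
    using suminf_minus_initial_segment[OF h(1), of n] h(2) by (simp add: sum_nonneg)
  finally show ?thesis .
qed

text \<open>Domination by a single summable sequence up to an \<open>x\<close>-dependent remainder of arbitrarily
  small total mass: this is what Young's inequality provides on balls for the \<open>q\<close>-norm with
  finite \<open>q\<close>.\<close>

definition uniformly_dominated_on :: "'a set \<Rightarrow> (nat \<Rightarrow> 'a \<Rightarrow> 'k::real_normed_vector) \<Rightarrow> bool" where
  "uniformly_dominated_on B u \<longleftrightarrow> (\<forall>e>0. \<exists>g. summable g \<and> (\<forall>x\<in>B. \<exists>h. summable h \<and> suminf h \<le> e \<and>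
      (\<forall>j. 0 \<le> h j \<and> norm (u j x) \<le> g j + h j)))"

lemma continuous_on_suminf_uniformly_dominated:
  fixes u :: "nat \<Rightarrow> 'a::topological_space \<Rightarrow> 'k::real_normed_field"
  assumes cont: "\<And>j. continuous_on B (u j)" and dom: "uniformly_dominated_on B u"
  shows "continuous_on B (\<lambda>x. \<Sum>j. u j x)"
proof (rule uniform_limit_theorem)
  show "\<forall>\<^sub>F n in sequentially. continuous_on B (\<lambda>x. \<Sum>j<n. u j x)"
    using cont by (intro always_eventually allI continuous_on_sum) auto
  show "uniform_limit B (\<lambda>n x. \<Sum>j<n. u j x) (\<lambda>x. \<Sum>j. u j x) sequentially"
  proof (rule uniform_limitI)
    fix e :: real assume "0 < e"
    then obtain g where g: "summable g" and gh: "\<And>x. x \<in> B \<Longrightarrow> \<exists>h. summable h \<and> suminf h \<le> e / 2 \<and>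
        (\<forall>j. 0 \<le> h j \<and> norm (u j x) \<le> g j + h j)"
      using dom unfolding uniformly_dominated_on_def by (meson half_gt_zero)
    obtain N where N: "\<And>n. N \<le> n \<Longrightarrow> norm (\<Sum>j. g (j + n)) < e / 2"
      using suminf_exist_split[OF _ g, of "e / 2"] \<open>0 < e\<close> by auto
    have "dist (\<Sum>j<n. u j x) (\<Sum>j. u j x) < e" if "N \<le> n" "x \<in> B" for n x
    proof -
      obtain h where h: "summable h" "suminf h \<le> e / 2" "\<And>j. 0 \<le> h j" "\<And>j. norm (u j x) \<le> g j + h j"
        using gh[OF \<open>x \<in> B\<close>] by blast
      have "dist (\<Sum>j<n. u j x) (\<Sum>j. u j x) \<le> (\<Sum>j. g (j + n)) + suminf h"
        by (rule dist_partial_sum_suminf_le[OF g h(1,3,4)])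
      also have "\<dots> < e"
        using N[OF \<open>N \<le> n\<close>] h(2) by (simp add: abs_less_iff)
      finally show ?thesis .
    qed
    then show "\<forall>\<^sub>F n in sequentially. \<forall>x\<in>B. dist (\<Sum>j<n. u j x) (\<Sum>j. u j x) < e"
      unfolding eventually_sequentially by blast
  qed
qed simp

section \<open>Closed balls for the \<open>q\<close>-norm\<close>

definition lp_cball :: "ereal \<Rightarrow> real \<Rightarrow> (nat \<Rightarrow> 'k::real_normed_vector) set" where
  "lp_cball q M = {x. in_lp q x \<and> lp_norm q x \<le> M}"

lemma lp_cball_infinity: "lp_cball \<infinity> M = {x :: nat \<Rightarrow> 'k::real_normed_vector. \<forall>j. norm (x j) \<le> M}"
proof (intro set_eqI iffI)
  fix x :: "nat \<Rightarrow> 'k" assume "x \<in> lp_cball \<infinity> M"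
  then have "bdd_above (range (\<lambda>j. norm (x j)))" "(SUP j. norm (x j)) \<le> M"
    by (simp_all add: lp_cball_def in_lp_def lp_norm_def)
  then show "x \<in> {x. \<forall>j. norm (x j) \<le> M}"
    using cSUP_upper[of _ UNIV "\<lambda>j. norm (x j)"] by (auto intro: order_trans)
next
  fix x :: "nat \<Rightarrow> 'k" assume "x \<in> {x. \<forall>j. norm (x j) \<le> M}"
  then have "bdd_above (range (\<lambda>j. norm (x j)))" "(SUP j. norm (x j)) \<le> M"
    by (auto intro: bdd_aboveI2 cSUP_least)
  then show "x \<in> lp_cball \<infinity> M"
    by (simp add: lp_cball_def in_lp_def lp_norm_def)
qed

lemma lp_cball_ereal:
  assumes r: "0 < r" and M: "0 < M"
  shows "lp_cball (ereal r) M = {x :: nat \<Rightarrow> 'k::real_normed_vector. \<forall>N. (\<Sum>j<N. norm (x j) powr r) \<le> M powr r}"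
proof (intro set_eqI iffI)
  fix x :: "nat \<Rightarrow> 'k" assume "x \<in> lp_cball (ereal r) M"
  then have s: "summable (\<lambda>j. norm (x j) powr r)" and le: "(\<Sum>j. norm (x j) powr r) powr (1 / r) \<le> M"
    by (simp_all add: lp_cball_def in_lp_def lp_norm_def)
  have "0 \<le> (\<Sum>j. norm (x j) powr r)"
    using s by (simp add: suminf_nonneg)
  then have "(\<Sum>j. norm (x j) powr r) = ((\<Sum>j. norm (x j) powr r) powr (1 / r)) powr r"
    using r by (simp add: powr_powr)
  also have "\<dots> \<le> M powr r"
    using le r by (intro powr_mono2) auto
  finally show "x \<in> {x. \<forall>N. (\<Sum>j<N. norm (x j) powr r) \<le> M powr r}"
    using sum_le_suminf[OF s] by (auto intro: order_trans)
next
  fix x :: "nat \<Rightarrow> 'k" assume "x \<in> {x. \<forall>N. (\<Sum>j<N. norm (x j) powr r) \<le> M powr r}"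
  then have partial: "\<And>N. (\<Sum>j<N. norm (x j) powr r) \<le> M powr r"
    by simp
  have s: "summable (\<lambda>j. norm (x j) powr r)"
    by (rule summableI_nonneg_bounded[OF _ partial]) simp
  have "(\<Sum>j. norm (x j) powr r) powr (1 / r) \<le> (M powr r) powr (1 / r)"
    using suminf_le_const[OF s partial] r by (intro powr_mono2) (auto intro: suminf_nonneg s)
  also have "\<dots> = M"
    using M r by (simp add: powr_powr)
  finally show "x \<in> lp_cball (ereal r) M"
    using s by (simp add: lp_cball_def in_lp_def lp_norm_def)
qed

lemma lp_cball_subset_coordinatewise_cball:
  assumes q: "0 < q" and M: "0 < M"
  shows "lp_cball q M \<subseteq> {x :: nat \<Rightarrow> 'k::real_normed_vector. \<forall>j. norm (x j) \<le> M}"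
proof (cases q)
  case (real r)
  then have r: "0 < r" using q by simp
  have "norm (x j) \<le> M" if x: "x \<in> lp_cball q M" for x :: "nat \<Rightarrow> 'k" and j
  proof -
    have "norm (x j) powr r \<le> (\<Sum>k<Suc j. norm (x k) powr r)"
      by (rule member_le_sum) auto
    also have "\<dots> \<le> M powr r"
      using x unfolding real lp_cball_ereal[OF r M] by blast
    finally have "norm (x j) powr r \<le> M powr r" .
    then show ?thesis
      using r M powr_less_mono2[of r M "norm (x j)"] by (meson not_le less_imp_le)
  qed
  then show ?thesis by blast
qed (use q lp_cball_infinity in auto)

lemma closed_lp_cball:
  assumes q: "0 < q" and M: "0 < M"
  shows "closed (lp_cball q M :: (nat \<Rightarrow> 'k::real_normed_vector) set)"
proof (cases q)
  case (real r)
  then have r: "0 < r" using q by simp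
  have "continuous_on UNIV (\<lambda>x::nat \<Rightarrow> 'k. norm (x j) powr r)" for j
    using r by (intro continuous_on_powr' continuous_on_norm continuous_on_product_coordinates
        continuous_on_const) auto
  then show ?thesis
    unfolding real lp_cball_ereal[OF r M]
    by (intro closed_Collect_all closed_Collect_le continuous_on_sum continuous_on_const)
qed (use q in \<open>auto simp: lp_cball_infinity intro!: closed_Collect_all closed_Collect_le
    continuous_on_norm continuous_on_product_coordinates\<close>)

lemma compact_coordinatewise_cball:
  "compact {x :: 'i \<Rightarrow> 'k::real_normed_field. \<forall>j. norm (x j) \<le> M}"
proof -
  have "{x :: 'i \<Rightarrow> 'k. \<forall>j. norm (x j) \<le> M} = PiE UNIV (\<lambda>_. cball 0 M)"
    by (auto simp: PiE_def Pi_def)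
  moreover have "compactin (product_topology (\<lambda>_. euclidean) UNIV) (PiE UNIV (\<lambda>_::'i. cball (0::'k) M))"
    by (simp add: compactin_PiE compact_cball_real_normed_field)
  ultimately show ?thesis
    by (simp add: euclidean_product_topology)
qed

lemma compact_lp_cball:
  assumes "0 < q" "0 < M"
  shows "compact (lp_cball q M :: (nat \<Rightarrow> 'k::real_normed_field) set)"
proof -
  have "compact ({x :: nat \<Rightarrow> 'k. \<forall>j. norm (x j) \<le> M} \<inter> lp_cball q M)"
    using assms by (intro compact_Int_closed compact_coordinatewise_cball closed_lp_cball)
  also have "{x :: nat \<Rightarrow> 'k. \<forall>j. norm (x j) \<le> M} \<inter> lp_cball q M = lp_cball q M"
    using lp_cball_subset_coordinatewise_cball[OF assms] by blast
  finally show ?thesis .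
qed

lemma Youngs_inequality_scaled:
  fixes c z s r :: real and d :: nat
  assumes c: "0 \<le> c" and z: "0 \<le> z" and s: "0 < s" and d: "1 \<le> d" and r: "real d < r"
  shows "c * z ^ d \<le> s powr (r / (r - d)) * c powr (r / (r - d)) + z powr r / s powr (r / d)"
proof -
  define p where "p = r / (r - d)"
  define t where "t = r / d"
  have p: "1 < p" and t: "1 < t" and pt: "1 / p + 1 / t = 1"
    using r d unfolding p_def t_def by (simp_all add: field_simps)
  have z_power: "(z ^ d) powr t = z powr r"
  proof (cases "z = 0")
    case False
    then have "(z ^ d) powr t = (z powr real d) powr t"
      using z by (simp add: powr_realpow)
    also have "\<dots> = z powr r"
      using d by (simp add: powr_powr t_def)
    finally show ?thesis .
  qed (use d in simp)
  have "c * z ^ d = (s * c) * (z ^ d / s)"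
    using s by simp
  also have "\<dots> \<le> (s * c) powr p / p + (z ^ d / s) powr t / t"
    using c z s by (intro Youngs_inequality p t pt) simp_all
  also have "\<dots> \<le> (s * c) powr p + (z ^ d / s) powr t"
    using p t by (intro add_mono) (simp_all add: divide_le_eq mult_le_cancel_left1)
  also have "\<dots> = s powr p * c powr p + z powr r / s powr t"
    using c z s by (simp add: powr_mult powr_divide z_power)
  finally show ?thesis
    unfolding p_def t_def .
qed

lemma uniformly_dominated_on_lp_cball_infinity:
  fixes a :: "nat \<Rightarrow> 'k::real_normed_field"
  assumes a: "summable (\<lambda>j. norm (a j))"
  shows "uniformly_dominated_on (lp_cball \<infinity> M) (\<lambda>j x. a j * x j ^ d)"
  unfolding uniformly_dominated_on_def
proof (intro allI impI)
  fix e :: real assume "0 < e"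
  have "norm (a j * x j ^ d) \<le> norm (a j) * M ^ d + 0" if "x \<in> lp_cball \<infinity> M" for x :: "nat \<Rightarrow> 'k" and j
    using that unfolding norm_mult norm_power lp_cball_infinity by (auto intro!: mult_left_mono power_mono)
  moreover have "summable (\<lambda>j. norm (a j) * M ^ d)"
    using a by (rule summable_mult2)
  ultimately show "\<exists>g. summable g \<and> (\<forall>x\<in>lp_cball \<infinity> M. \<exists>h. summable h \<and> suminf h \<le> e \<and>
      (\<forall>j. 0 \<le> h j \<and> norm (a j * x j ^ d) \<le> g j + h j))"
    using \<open>0 < e\<close> by (intro exI[of _ "\<lambda>j. norm (a j) * M ^ d"] conjI ballI exI[of _ "\<lambda>_. 0"]) auto
qed

lemma uniformly_dominated_on_lp_cball_ereal:
  fixes a :: "nat \<Rightarrow> 'k::real_normed_field"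
  assumes d: "1 \<le> d" "real d < r" and M: "0 < M"
    and a: "summable (\<lambda>j. norm (a j) powr (r / (r - d)))"
  shows "uniformly_dominated_on (lp_cball (ereal r) M) (\<lambda>j x. a j * x j ^ d)"
  unfolding uniformly_dominated_on_def
proof (intro allI impI)
  fix e :: real assume e: "0 < e"
  define p where "p = r / (r - d)"
  define t where "t = r / d"
  have r: "0 < r" and t: "0 < t"
    using d unfolding t_def by simp_all
  \<comment> \<open>the scale \<open>s\<close> makes the \<open>x\<close>-dependent part of Young's bound sum to at most \<open>e\<close>\<close>
  define s where "s = (M powr r / e) powr (1 / t)"
  have s: "0 < s" "s powr t = M powr r / e"
    using M e t unfolding s_def by (simp_all add: powr_powr)
  have "\<exists>h. summable h \<and> suminf h \<le> e \<and>
      (\<forall>j. 0 \<le> h j \<and> norm (a j * x j ^ d) \<le> s powr p * norm (a j) powr p + h j)"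
    if x: "x \<in> lp_cball (ereal r) M" for x
  proof (intro exI conjI allI)
    have partial: "\<And>N. (\<Sum>j<N. norm (x j) powr r) \<le> M powr r"
      using x unfolding lp_cball_ereal[OF r M] by blast
    then have x_summable: "summable (\<lambda>j. norm (x j) powr r)"
      by (intro summableI_nonneg_bounded) auto
    then show "summable (\<lambda>j. norm (x j) powr r / s powr t)"
      by (rule summable_divide)
    have "(\<Sum>j. norm (x j) powr r / s powr t) = (\<Sum>j. norm (x j) powr r) / s powr t"
      using x_summable by (rule suminf_divide)
    also have "\<dots> \<le> M powr r / s powr t"
      by (intro divide_right_mono suminf_le_const[OF x_summable partial]) simp
    also have "\<dots> = e"
      using s M e by simp
    finally show "(\<Sum>j. norm (x j) powr r / s powr t) \<le> e" .
    fix j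
    show "0 \<le> norm (x j) powr r / s powr t"
      by simp
    show "norm (a j * x j ^ d) \<le> s powr p * norm (a j) powr p + norm (x j) powr r / s powr t"
      unfolding norm_mult norm_power p_def t_def using s d
      by (intro Youngs_inequality_scaled) simp_all
  qed
  moreover have "summable (\<lambda>j. s powr p * norm (a j) powr p)"
    using a unfolding p_def by (rule summable_mult)
  ultimately show "\<exists>g. summable g \<and> (\<forall>x\<in>lp_cball (ereal r) M. \<exists>h. summable h \<and> suminf h \<le> e \<and>
      (\<forall>j. 0 \<le> h j \<and> norm (a j * x j ^ d) \<le> g j + h j))"
    by blast
qed

lemma continuous_on_pairing_lp_cball:
  fixes a :: "nat \<Rightarrow> 'k::real_normed_field"
  assumes d: "1 \<le> d" "ereal (real d) < q" and a: "in_lp (dual_exp q d) a" and M: "0 < M"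
  shows "continuous_on (lp_cball q M) (\<lambda>x. pairing a x d)"
  unfolding pairing_def
proof (rule continuous_on_suminf_uniformly_dominated)
  show "continuous_on (lp_cball q M) (\<lambda>x. a j * x j ^ d)" for j
    using continuous_on_subset[OF continuous_on_product_coordinates, of "lp_cball q M" j]
    by (intro continuous_intros) auto
  show "uniformly_dominated_on (lp_cball q M) (\<lambda>j x. a j * x j ^ d)"
  proof (cases q)
    case (real r)
    with d have "dual_exp q d = ereal (r / (r - d))"
      by (simp add: dual_exp_def)
    with a have "summable (\<lambda>j. norm (a j) powr (r / (r - d)))"
      by (simp add: in_lp_def)
    with d M show ?thesis
      unfolding real by (intro uniformly_dominated_on_lp_cball_ereal) simp_all
  next
    case PInf
    with a show ?thesis
      unfolding PInf by (intro uniformly_dominated_on_lp_cball_infinity) (simp add: in_lp_def dual_exp_def)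
  qed (use d in simp)
qed

lemma continuous_on_prod_list_map:
  fixes g :: "'d \<Rightarrow> 'a::topological_space \<Rightarrow> 'k::real_normed_field"
  assumes "\<And>d. d \<in> set ds \<Longrightarrow> continuous_on B (g d)"
  shows "continuous_on B (\<lambda>x. prod_list (map (\<lambda>d. g d x) ds))"
  using assms by (induction ds) (auto intro!: continuous_intros)

lemma continuous_on_mult_poly:
  fixes a :: "nat \<Rightarrow> nat \<Rightarrow> 'k::real_normed_field"
  assumes "\<And>d. d \<in> {1..D} \<Longrightarrow> continuous_on B (\<lambda>x. pairing (a d) x d)"
  shows "continuous_on B (mult_poly D a)"
  unfolding mult_poly_def
proof (intro continuous_on_sum continuous_on_prod_list_map assms)
  fix k ds d assume "ds \<in> Dtuples D k" "d \<in> set ds"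
  then show "d \<in> {1..D}"
    using member_le_sum_list[of d ds] unfolding Dtuples_def by auto
qed

section \<open>Finitely solvable systems on a compact set\<close>

lemma compact_solvable_if_finitely_solvable:
  fixes f :: "'i \<Rightarrow> 'a::t2_space \<Rightarrow> 'b::t1_space"
  assumes K: "compact K" and cont: "\<And>i. i \<in> I \<Longrightarrow> continuous_on K (f i)"
    and finite_sol: "\<And>S. finite S \<Longrightarrow> S \<subseteq> I \<Longrightarrow> \<exists>x\<in>K. \<forall>i\<in>S. f i x = b i"
  shows "\<exists>x\<in>K. \<forall>i\<in>I. f i x = b i"
proof -
  define Z where "Z i = {x \<in> K. f i x = b i}" for i
  have "\<forall>A\<in>Z ` I. closed A"
    unfolding Z_def using cont compact_imp_closed[OF K]
    by (auto intro: continuous_closed_preimage_constant)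
  moreover have "K \<inter> \<Inter>\<Z> \<noteq> {}" if "\<Z> \<subseteq> Z ` I" "finite \<Z>" for \<Z>
  proof -
    obtain S where "S \<subseteq> I" "finite S" "\<Z> = Z ` S"
      using \<open>\<Z> \<subseteq> Z ` I\<close> \<open>finite \<Z>\<close> by (meson finite_subset_image)
    then show ?thesis
      using finite_sol[of S] unfolding Z_def by auto
  qed
  ultimately have "K \<inter> \<Inter>(Z ` I) \<noteq> {}"
    using K unfolding compact_fip by blast
  then show ?thesis
    unfolding Z_def by auto
qed

theorem theorem3:
  fixes I :: "'i set"
    and a :: "'i \<Rightarrow> nat \<Rightarrow> nat \<Rightarrow> 'k::real_normed_field"
    and b :: "'i \<Rightarrow> 'k"
    and D :: nat and q :: ereal and M :: real
  assumes D_pos: "1 \<le> D"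
    and Dq: "ereal (real D) < q"
    and I_inf: "infinite I"
    and a_lp: "\<And>i d. i \<in> I \<Longrightarrow> d \<in> {1..D} \<Longrightarrow> in_lp (dual_exp q d) (a i d)"
    and M_pos: "M > 0"
    and fin_sol: "\<And>S. finite S \<Longrightarrow> S \<subseteq> I \<Longrightarrow>
        \<exists>x. in_lp q x \<and> lp_norm q x \<le> M \<and> (\<forall>i\<in>S. mult_poly D (a i) x = b i)"
  shows "\<exists>x. in_lp q x \<and> lp_norm q x \<le> M \<and> (\<forall>i\<in>I. mult_poly D (a i) x = b i)"
proof -
  have "0 < q"
    using D_pos Dq by (cases q) auto
  then have "compact (lp_cball q M :: (nat \<Rightarrow> 'k) set)"
    using M_pos by (rule compact_lp_cball)
  moreover have "continuous_on (lp_cball q M) (mult_poly D (a i))" if "i \<in> I" for i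
  proof (rule continuous_on_mult_poly)
    fix d assume d: "d \<in> {1..D}"
    then have "ereal (real d) \<le> ereal (real D)"
      by simp
    then have "ereal (real d) < q"
      using Dq by (rule order.strict_trans1)
    then show "continuous_on (lp_cball q M) (\<lambda>x. pairing (a i d) x d)"
      using d a_lp[OF that d] M_pos by (intro continuous_on_pairing_lp_cball) auto
  qed
  moreover have "\<exists>x\<in>lp_cball q M. \<forall>i\<in>S. mult_poly D (a i) x = b i" if "finite S" "S \<subseteq> I" for S
    using fin_sol[OF that] unfolding lp_cball_def by blast
  ultimately have "\<exists>x\<in>lp_cball q M. \<forall>i\<in>I. mult_poly D (a i) x = b i"
    by (rule compact_solvable_if_finitely_solvable)
  then show ?thesis
    unfolding lp_cball_def by blast
qed

end
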